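(* Let $C$ be a saturated set of atomic constraints and let $I$ be a set of refinement variables. Let $\theta$ be a solution of the restriction $C|_I$. Then there is a solution $\theta'$ of $C$ such that $\theta'(X)(d) = \theta(X)(d)$ for all $X \in I$ and all datatypes $d$.
   Context: Fix a finite set $\underline{D}$ of datatype identifiers. Each $d \in \underline{D}$ has a finite set $\mathrm{Con}(d)$ of constructors. There is a countable supply of refinement variables $X, Y, Z, \dots$. An assignment $\theta$ maps each refinement variable $X$ to a function that sends each $d \in \underline{D}$ to a subset $\theta(X)(d) \subseteq \mathrm{Con}(d)$. A constructor set expression over $d$ is either a finite set $\{k_1,\dots,k_m\} \subseteq \mathrm{Con}(d)$ or a pair $X(d)$. Its meaning is $\theta[\![X(d)]\!] = \theta(X)(d)$ and $\theta[\![\{k_1,\dots,k_m\}]\!] = \{k_1,\dots,k_m\}$. An inclusion $S_1 \subseteq S_2$ relates two expressions over the same $d$, and $k \in S$ abbreviates $\{k\} \subseteq S$. A (conditional) constraint $\phi \mathbin{?} S_1 \subseteq S_2$ consists of a finite guard set $\phi$ of inclusions of the form $k \in X(d)$ together with a body $S_1 \subseteq S_2$. $\theta$ satisfies $\phi \mathbin{?} S_1 \subseteq S_2$ if the following holds: whenever $k \in \theta(X)(d)$ for all $k \in X(d)$ in $\phi$, then $\theta[\![S_1]\!] \subseteq \theta[\![S_2]\!]$. A solution of a set of constraints is an assignment satisfying all of them. A constraint is atomic if its body has one of the forms $X(d) \subseteq Y(d)$, $X(d) \subseteq \{k_1,\dots,k_m\}$, $k \in X(d)$, or $k \in \emptyset$.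 Conclusions of rules are converted to atomic form, as follows. A body $\{k_1,\dots,k_m\} \subseteq S$ becomes the bodies $k_i \in S$. A body $k \in \{k_1,\dots,k_m\}$ is dropped if $k$ is among the $k_i$, and becomes $k \in \emptyset$ otherwise. An atomic set $C$ is saturated if it is closed under the following rules: - (Transitivity) from $\phi \mathbin{?} S_1 \subseteq S_2$ and $\psi \mathbin{?} S_2 \subseteq S_3$, derive $\phi \cup \psi \mathbin{?} S_1 \subseteq S_3$; - (Satisfaction) from $\phi \mathbin{?} k \in X(d)$ and $\psi \cup \{k \in X(d)\} \mathbin{?} S_1 \subseteq S_2$, derive $\phi \cup \psi \mathbin{?} S_1 \subseteq S_2$; - (Weakening) from $\phi \mathbin{?} X(d) \subseteq Y(d)$ and $\psi \cup \{k \in Y(d)\} \mathbin{?} S_1 \subseteq S_2$, derive $\phi \cup \psi \cup \{k \in X(d)\} \mathbin{?} S_1 \subseteq S_2$. For a set $I$ of refinement variables, the restriction $C|_I$ is the set of those constraints in $C$ all of whose refinement variables (occurring in the guard or the body) lie in $I$. *)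

theory Defs
  imports Main "HOL-Library.Countable"
begin

text \<open>
  Datatype identifiers: the (finite) type 'd, so the finite set D of datatype
  identifiers is UNIV.
\<close>

definition is_assignment :: "('d \<Rightarrow> 'k set) \<Rightarrow> ('v \<Rightarrow> 'd \<Rightarrow> 'k set) \<Rightarrow> bool" where
  "is_assignment Con \<theta> \<longleftrightarrow> (\<forall>X d. \<theta> X d \<subseteq> Con d)"

text \<open>Constructor set expressions: a literal finite set, or a refinement variable
  (the datatype d is recorded in the inclusion).\<close>
datatype ('k, 'v) sexp = Lit "'k set" | RVar 'v

datatype ('d, 'k, 'v) incl = Incl 'd "('k, 'v) sexp" "('k, 'v) sexp"

text \<open>A guard atom (k, X, d) stands for the inclusion k \<in> X(d).
  A constraint is a pair (guard, body).\<close>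
type_synonym ('d, 'k, 'v) constr = "('k \<times> 'v \<times> 'd) set \<times> ('d, 'k, 'v) incl"

fun sem :: "('v \<Rightarrow> 'd \<Rightarrow> 'k set) \<Rightarrow> 'd \<Rightarrow> ('k, 'v) sexp \<Rightarrow> 'k set" where
  "sem \<theta> d (Lit K) = K"
| "sem \<theta> d (RVar X) = \<theta> X d"

fun sat_incl :: "('v \<Rightarrow> 'd \<Rightarrow> 'k set) \<Rightarrow> ('d, 'k, 'v) incl \<Rightarrow> bool" where
  "sat_incl \<theta> (Incl d S1 S2) \<longleftrightarrow> sem \<theta> d S1 \<subseteq> sem \<theta> d S2"

definition satisfies :: "('v \<Rightarrow> 'd \<Rightarrow> 'k set) \<Rightarrow> ('d, 'k, 'v) constr \<Rightarrow> bool" where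
  "satisfies \<theta> c \<longleftrightarrow>
     ((\<forall>(k, X, d) \<in> fst c. k \<in> \<theta> X d) \<longrightarrow> sat_incl \<theta> (snd c))"

definition is_solution :: "('d \<Rightarrow> 'k set) \<Rightarrow> ('v \<Rightarrow> 'd \<Rightarrow> 'k set) \<Rightarrow> ('d, 'k, 'v) constr set \<Rightarrow> bool" where
  "is_solution Con \<theta> C \<longleftrightarrow> is_assignment Con \<theta> \<and> (\<forall>c \<in> C. satisfies \<theta> c)"

fun wf_sexp :: "('d \<Rightarrow> 'k set) \<Rightarrow> 'd \<Rightarrow> ('k, 'v) sexp \<Rightarrow> bool" where
  "wf_sexp Con d (Lit K) \<longleftrightarrow> finite K \<and> K \<subseteq> Con d"
| "wf_sexp Con d (RVar X) \<longleftrightarrow> True"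

fun wf_incl :: "('d \<Rightarrow> 'k set) \<Rightarrow> ('d, 'k, 'v) incl \<Rightarrow> bool" where
  "wf_incl Con (Incl d S1 S2) \<longleftrightarrow> wf_sexp Con d S1 \<and> wf_sexp Con d S2"

definition wf_constr :: "('d \<Rightarrow> 'k set) \<Rightarrow> ('d, 'k, 'v) constr \<Rightarrow> bool" where
  "wf_constr Con c \<longleftrightarrow> finite (fst c) \<and> (\<forall>(k, X, d) \<in> fst c. k \<in> Con d) \<and> wf_incl Con (snd c)"

fun atomic_incl :: "('d, 'k, 'v) incl \<Rightarrow> bool" where
  "atomic_incl (Incl d (RVar X) (RVar Y)) \<longleftrightarrow> True"
| "atomic_incl (Incl d (RVar X) (Lit K)) \<longleftrightarrow> True"
| "atomic_incl (Incl d (Lit K) (RVar X)) \<longleftrightarrow> (\<exists>k. K = {k})"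
| "atomic_incl (Incl d (Lit K) (Lit K')) \<longleftrightarrow> (\<exists>k. K = {k}) \<and> K' = {}"

definition atomic_constr :: "('d, 'k, 'v) constr \<Rightarrow> bool" where
  "atomic_constr c \<longleftrightarrow> atomic_incl (snd c)"

fun atomize :: "('d, 'k, 'v) incl \<Rightarrow> ('d, 'k, 'v) incl set" where
  "atomize (Incl d (RVar X) S) = {Incl d (RVar X) S}"
| "atomize (Incl d (Lit K) (RVar Y)) = {Incl d (Lit {k}) (RVar Y) | k. k \<in> K}"
| "atomize (Incl d (Lit K) (Lit K')) = {Incl d (Lit {k}) (Lit {}) | k. k \<in> K - K'}"

definition concl_in :: "('d, 'k, 'v) constr set \<Rightarrow> ('k \<times> 'v \<times> 'd) set \<Rightarrow> ('d, 'k, 'v) incl \<Rightarrow> bool" where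
  "concl_in C \<phi> b \<longleftrightarrow> (\<forall>b' \<in> atomize b. (\<phi>, b') \<in> C)"

definition saturated :: "('d, 'k, 'v) constr set \<Rightarrow> bool" where
  "saturated C \<longleftrightarrow>
     \<comment> \<open>Transitivity\<close>
     (\<forall>\<phi> \<psi> d S1 S2 S3. (\<phi>, Incl d S1 S2) \<in> C \<longrightarrow> (\<psi>, Incl d S2 S3) \<in> C
        \<longrightarrow> concl_in C (\<phi> \<union> \<psi>) (Incl d S1 S3)) \<and>
     \<comment> \<open>Satisfaction\<close>
     (\<forall>\<phi> \<psi> k X d b. (\<phi>, Incl d (Lit {k}) (RVar X)) \<in> C \<longrightarrow> (\<psi> \<union> {(k, X, d)}, b) \<in> C
        \<longrightarrow> concl_in C (\<phi> \<union> \<psi>) b) \<and>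
     \<comment> \<open>Weakening\<close>
     (\<forall>\<phi> \<psi> k X Y d b. (\<phi>, Incl d (RVar X) (RVar Y)) \<in> C \<longrightarrow> (\<psi> \<union> {(k, Y, d)}, b) \<in> C
        \<longrightarrow> concl_in C (\<phi> \<union> \<psi> \<union> {(k, X, d)}) b)"

fun sexp_vars :: "('k, 'v) sexp \<Rightarrow> 'v set" where
  "sexp_vars (Lit K) = {}"
| "sexp_vars (RVar X) = {X}"

fun incl_vars :: "('d, 'k, 'v) incl \<Rightarrow> 'v set" where
  "incl_vars (Incl d S1 S2) = sexp_vars S1 \<union> sexp_vars S2"

definition constr_vars :: "('d, 'k, 'v) constr \<Rightarrow> 'v set" where
  "constr_vars c = {X. \<exists>k d. (k, X, d) \<in> fst c} \<union> incl_vars (snd c)"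

definition restrict :: "('d, 'k, 'v) constr set \<Rightarrow> 'v set \<Rightarrow> ('d, 'k, 'v) constr set" where
  "restrict C I = {c \<in> C. constr_vars c \<subseteq> I}"

end

theory Submission
  imports Defs
begin

text \<open>
  Extend \<open>\<theta>\<close> from \<open>I\<close> by the least set of atoms \<open>k \<in> Y(d)\<close>, \<open>Y \<notin> I\<close>, that the
  constraints of \<open>C\<close> force once their guards hold: lower bounds \<open>k \<in> Y(d)\<close> and flows
  \<open>X(d) \<subseteq> Y(d)\<close> out of an atom \<open>k \<in> X(d)\<close> already obtained.  Saturation makes every
  derived guard atom dischargeable: Satisfaction and Weakening replace it by the guard of
  the constraint that derived it, so by induction on derivations every constraint of \<open>C\<close>
  whose guard holds has a variant in \<open>C\<close> whose guard consists of atoms of \<open>\<theta>\<close> on \<open>I\<close>.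
  If its body only mentions variables of \<open>I\<close>, that variant lies in \<open>C|\<^sub>I\<close> and is
  satisfied by \<open>\<theta>\<close>.  Bodies with a variable outside \<open>I\<close> are satisfied by construction
  (lower bounds) or, via Transitivity, by induction on the derivation of the atom
  (upper bounds).
\<close>

lemma atomize_atomic: "atomic_incl b \<Longrightarrow> atomize b = {b}"
  by (cases b rule: atomic_incl.cases) auto

lemma concl_in_atomic: "atomic_incl b \<Longrightarrow> concl_in C \<phi> b \<longleftrightarrow> (\<phi>, b) \<in> C"
  by (simp add: concl_in_def atomize_atomic)

lemma saturated_transitivity:
  "saturated C \<Longrightarrow> (\<phi>, Incl d S1 S2) \<in> C \<Longrightarrow> (\<psi>, Incl d S2 S3) \<in> C
    \<Longrightarrow> concl_in C (\<phi> \<union> \<psi>) (Incl d S1 S3)"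
  unfolding saturated_def by blast

lemma saturated_satisfaction:
  "saturated C \<Longrightarrow> atomic_incl b \<Longrightarrow> (\<phi>, Incl d (Lit {k}) (RVar X)) \<in> C
    \<Longrightarrow> (\<psi> \<union> {(k, X, d)}, b) \<in> C \<Longrightarrow> (\<phi> \<union> \<psi>, b) \<in> C"
  unfolding saturated_def by (metis concl_in_atomic)

lemma saturated_weakening:
  "saturated C \<Longrightarrow> atomic_incl b \<Longrightarrow> (\<phi>, Incl d (RVar X) (RVar Y)) \<in> C
    \<Longrightarrow> (\<psi> \<union> {(k, Y, d)}, b) \<in> C \<Longrightarrow> (\<phi> \<union> \<psi> \<union> {(k, X, d)}, b) \<in> C"
  unfolding saturated_def by (metis concl_in_atomic)

locale restricted_solution =
  fixes Con :: "'d \<Rightarrow> 'k set"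
    and C :: "('d, 'k, 'v) constr set"
    and I :: "'v set"
    and \<theta> :: "'v \<Rightarrow> 'd \<Rightarrow> 'k set"
  assumes wf_atomic: "\<forall>c \<in> C. wf_constr Con c \<and> atomic_constr c"
    and saturated: "saturated C"
    and solution: "is_solution Con \<theta> (restrict C I)"
begin

lemma finite_guard: "(\<phi>, b) \<in> C \<Longrightarrow> finite \<phi>"
  using wf_atomic by (auto simp: wf_constr_def)

lemma atomic_body: "(\<phi>, b) \<in> C \<Longrightarrow> atomic_incl b"
  using wf_atomic by (auto simp: atomic_constr_def)

definition base_atoms :: "('k \<times> 'v \<times> 'd) set" where
  "base_atoms = {(k, X, d). X \<in> I \<and> k \<in> \<theta> X d}"

text \<open>Guards are required with \<open>\<forall>a \<in> \<phi>. a \<in> derived\<close> rather than \<open>\<phi> \<subseteq> derived\<close>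
  only because the monotonicity prover of \<open>inductive_set\<close> accepts the former.\<close>

inductive_set derived :: "('k \<times> 'v \<times> 'd) set" where
  base: "(k, X, d) \<in> base_atoms \<Longrightarrow> (k, X, d) \<in> derived"
| lower: "Y \<notin> I \<Longrightarrow> (\<phi>, Incl d (Lit {k}) (RVar Y)) \<in> C
    \<Longrightarrow> \<forall>a \<in> \<phi>. a \<in> derived \<Longrightarrow> (k, Y, d) \<in> derived"
| flow: "Y \<notin> I \<Longrightarrow> (\<phi>, Incl d (RVar X) (RVar Y)) \<in> C
    \<Longrightarrow> \<forall>a \<in> \<phi>. a \<in> derived \<Longrightarrow> (k, X, d) \<in> derived \<Longrightarrow> (k, Y, d) \<in> derived"

definition extension :: "'v \<Rightarrow> 'd \<Rightarrow> 'k set" where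
  "extension X d = {k. (k, X, d) \<in> derived}"

lemma derived_in_I: "(k, X, d) \<in> derived \<Longrightarrow> X \<in> I \<Longrightarrow> k \<in> \<theta> X d"
  by (cases rule: derived.cases) (auto simp: base_atoms_def)

lemma extension_on_I: "X \<in> I \<Longrightarrow> extension X d = \<theta> X d"
  by (auto simp: extension_def base_atoms_def intro: derived.base dest: derived_in_I)

lemma sem_extension: "sexp_vars S \<subseteq> I \<Longrightarrow> sem extension d S = sem \<theta> d S"
  by (cases S) (auto simp: extension_on_I)

definition dischargeable :: "'k \<times> 'v \<times> 'd \<Rightarrow> bool" where
  "dischargeable a \<longleftrightarrow>
     (\<forall>\<psi> b. (insert a \<psi>, b) \<in> C \<longrightarrow> (\<exists>\<psi>' \<subseteq> base_atoms. (\<psi>' \<union> \<psi>, b) \<in> C))"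

lemma discharge_finite:
  assumes "finite \<phi>" "\<forall>a \<in> \<phi>. dischargeable a" "(\<phi> \<union> \<psi>, b) \<in> C"
  shows "\<exists>\<psi>' \<subseteq> base_atoms. (\<psi>' \<union> \<psi>, b) \<in> C"
  using assms
proof (induction \<phi> arbitrary: \<psi> rule: finite_induct)
  case empty
  then show ?case by auto
next
  case (insert a F)
  from insert.prems have "(insert a (F \<union> \<psi>), b) \<in> C" "dischargeable a"
    by auto
  then obtain \<psi>1 where \<psi>1: "\<psi>1 \<subseteq> base_atoms" "(\<psi>1 \<union> (F \<union> \<psi>), b) \<in> C"
    unfolding dischargeable_def by blast
  then have "(F \<union> (\<psi>1 \<union> \<psi>), b) \<in> C"
    by (simp add: Un_left_commute)
  moreover have "\<forall>a \<in> F. dischargeable a"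
    using insert.prems(1) by simp
  ultimately obtain \<psi>2 where \<psi>2: "\<psi>2 \<subseteq> base_atoms" "(\<psi>2 \<union> (\<psi>1 \<union> \<psi>), b) \<in> C"
    using insert.IH by blast
  show ?case
  proof (intro exI conjI)
    show "\<psi>2 \<union> \<psi>1 \<subseteq> base_atoms"
      using \<psi>1(1) \<psi>2(1) by simp
    show "(\<psi>2 \<union> \<psi>1 \<union> \<psi>, b) \<in> C"
      using \<psi>2(2) by (simp add: Un_assoc)
  qed
qed

lemma derived_dischargeable: "a \<in> derived \<Longrightarrow> dischargeable a"
proof (induction rule: derived.induct)
  case (base k X d)
  then show ?case
    unfolding dischargeable_def by (auto intro!: exI[of _ "{(k, X, d)}"])
next
  case (lower Y \<phi> d k)
  show ?case
    unfolding dischargeable_def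
  proof (intro allI impI)
    fix \<psi> b
    assume "(insert (k, Y, d) \<psi>, b) \<in> C"
    then have "(\<phi> \<union> \<psi>, b) \<in> C"
      using saturated_satisfaction[OF saturated atomic_body lower.hyps(2)] by auto
    then show "\<exists>\<psi>' \<subseteq> base_atoms. (\<psi>' \<union> \<psi>, b) \<in> C"
      using discharge_finite[OF finite_guard[OF lower.hyps(2)]] lower.IH by blast
  qed
next
  case (flow Y \<phi> d X k)
  show ?case
    unfolding dischargeable_def
  proof (intro allI impI)
    fix \<psi> b
    assume "(insert (k, Y, d) \<psi>, b) \<in> C"
    then have "(insert (k, X, d) (\<phi> \<union> \<psi>), b) \<in> C"
      using saturated_weakening[OF saturated atomic_body flow.hyps(2)] by auto
    then obtain \<psi>1 where \<psi>1: "\<psi>1 \<subseteq> base_atoms" "(\<psi>1 \<union> (\<phi> \<union> \<psi>), b) \<in> C"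
      using \<open>dischargeable (k, X, d)\<close> unfolding dischargeable_def by blast
    then have "(\<phi> \<union> (\<psi>1 \<union> \<psi>), b) \<in> C"
      by (simp add: Un_left_commute)
    then obtain \<psi>2 where "\<psi>2 \<subseteq> base_atoms" "(\<psi>2 \<union> (\<psi>1 \<union> \<psi>), b) \<in> C"
      using discharge_finite[OF finite_guard[OF flow.hyps(2)]] flow.IH(1) by blast
    with \<psi>1(1) show "\<exists>\<psi>' \<subseteq> base_atoms. (\<psi>' \<union> \<psi>, b) \<in> C"
      by (intro exI[of _ "\<psi>2 \<union> \<psi>1"]) (auto simp: Un_assoc)
  qed
qed

lemma discharge_guard:
  assumes "(\<phi>, b) \<in> C" "\<phi> \<subseteq> derived"
  shows "\<exists>\<psi> \<subseteq> base_atoms. (\<psi>, b) \<in> C"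
proof -
  have "\<forall>a \<in> \<phi>. dischargeable a"
    using assms(2) derived_dischargeable by blast
  moreover have "(\<phi> \<union> {}, b) \<in> C"
    using assms(1) by simp
  ultimately obtain \<psi> where "\<psi> \<subseteq> base_atoms" "(\<psi> \<union> {}, b) \<in> C"
    using discharge_finite[OF finite_guard[OF assms(1)]] by blast
  then show ?thesis
    by auto
qed

lemma sat_incl_extension_vars_in_I:
  assumes "(\<phi>, b) \<in> C" "\<phi> \<subseteq> derived" "incl_vars b \<subseteq> I"
  shows "sat_incl extension b"
proof -
  obtain \<psi> where \<psi>: "\<psi> \<subseteq> base_atoms" "(\<psi>, b) \<in> C"
    using discharge_guard assms(1,2) by blast
  then have "(\<psi>, b) \<in> restrict C I"
    using assms(3) by (auto simp: restrict_def constr_vars_def base_atoms_def)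
  with solution have "satisfies \<theta> (\<psi>, b)"
    by (simp add: is_solution_def)
  with \<psi>(1) have "sat_incl \<theta> b"
    by (auto simp: satisfies_def base_atoms_def)
  with assms(3) show ?thesis
    by (cases b) (simp add: sem_extension)
qed

lemma lower_bound_in_extension:
  assumes "concl_in C \<phi> (Incl d (Lit {k}) S)" "\<phi> \<subseteq> derived"
  shows "k \<in> sem extension d S"
proof (cases S)
  case (Lit K)
  show ?thesis
  proof (rule ccontr)
    assume "k \<notin> sem extension d S"
    with assms(1) Lit have "(\<phi>, Incl d (Lit {k}) (Lit {})) \<in> C"
      by (simp add: concl_in_def)
    from sat_incl_extension_vars_in_I[OF this assms(2)] show False
      by simp
  qed
next
  case (RVar Y)
  with assms(1) have lower: "(\<phi>, Incl d (Lit {k}) (RVar Y)) \<in> C"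
    by (simp add: concl_in_def)
  show ?thesis
  proof (cases "Y \<in> I")
    case True
    with sat_incl_extension_vars_in_I[OF lower assms(2)] RVar show ?thesis
      by simp
  next
    case False
    with lower assms(2) RVar show ?thesis
      by (auto simp: extension_def subset_eq intro: derived.lower)
  qed
qed

lemma upper_bound_in_extension_on_I:
  "(k, X, d) \<in> derived \<Longrightarrow> (\<phi>, Incl d (RVar X) S) \<in> C \<Longrightarrow> \<phi> \<subseteq> derived
    \<Longrightarrow> sexp_vars S \<subseteq> I \<Longrightarrow> k \<in> sem extension d S"
proof (induction "(k, X, d)" arbitrary: k X d \<phi> rule: derived.induct)
  case (base k X d)
  then have "incl_vars (Incl d (RVar X) S) \<subseteq> I"
    by (auto simp: base_atoms_def)
  with sat_incl_extension_vars_in_I[OF base.prems(1,2)] base.hyps show ?case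
    by (auto simp: extension_def intro: derived.base)
next
  case (lower X \<phi>0 d k)
  have "concl_in C (\<phi>0 \<union> \<phi>) (Incl d (Lit {k}) S)"
    using saturated_transitivity[OF saturated lower.hyps(2) lower.prems(1)] .
  moreover have "\<phi>0 \<union> \<phi> \<subseteq> derived"
    using lower.hyps(3) lower.prems(2) by auto
  ultimately show ?case
    by (rule lower_bound_in_extension)
next
  case (flow X \<phi>0 d X0 k)
  have "concl_in C (\<phi>0 \<union> \<phi>) (Incl d (RVar X0) S)"
    using saturated_transitivity[OF saturated flow.hyps(2) flow.prems(1)] .
  then have "(\<phi>0 \<union> \<phi>, Incl d (RVar X0) S) \<in> C"
    by (cases S) (simp_all add: concl_in_atomic)
  moreover have "\<phi>0 \<union> \<phi> \<subseteq> derived"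
    using flow.hyps(3) flow.prems(2) by auto
  ultimately show ?case
    using flow.hyps flow.prems(3) by blast
qed

lemma upper_bound_in_extension:
  assumes "(k, X, d) \<in> derived" "(\<phi>, Incl d (RVar X) S) \<in> C" "\<phi> \<subseteq> derived"
  shows "k \<in> sem extension d S"
proof (cases "\<exists>Y. S = RVar Y \<and> Y \<notin> I")
  case True
  then obtain Y where "S = RVar Y" "Y \<notin> I"
    by blast
  with assms show ?thesis
    by (auto simp: extension_def subset_eq intro: derived.flow)
next
  case False
  then have "sexp_vars S \<subseteq> I"
    by (cases S) auto
  with assms show ?thesis
    by (rule upper_bound_in_extension_on_I)
qed

lemma derived_in_Con: "a \<in> derived \<Longrightarrow> a \<in> {(k, X, d). k \<in> Con d}"
proof (induction rule: derived.induct)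
  case (base k X d)
  with solution show ?case
    by (auto simp: base_atoms_def is_solution_def is_assignment_def)
next
  case (lower Y \<phi> d k)
  with wf_atomic show ?case
    by (fastforce simp: wf_constr_def)
next
  case (flow Y \<phi> d X k)
  then show ?case
    by simp
qed

lemma extension_solution: "is_solution Con extension C"
  unfolding is_solution_def
proof (intro conjI ballI)
  show "is_assignment Con extension"
    using derived_in_Con by (auto simp: is_assignment_def extension_def)
next
  fix c
  assume "c \<in> C"
  then obtain \<phi> d S1 S2 where c: "c = (\<phi>, Incl d S1 S2)" "(\<phi>, Incl d S1 S2) \<in> C"
    by (metis incl.exhaust prod.exhaust)
  show "satisfies extension c"
    unfolding satisfies_def
  proof
    assume "\<forall>(k, X, d) \<in> fst c. k \<in> extension X d"
    then have guard: "\<phi> \<subseteq> derived"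
      using c(1) by (auto simp: extension_def)
    have "sem extension d S1 \<subseteq> sem extension d S2"
    proof (cases S1)
      case (Lit K)
      with atomic_body[OF c(2)] obtain k where "K = {k}"
        by (cases S2) auto
      with Lit c(2) guard lower_bound_in_extension show ?thesis
        by (simp add: concl_in_atomic atomic_body)
    next
      case (RVar X)
      with c(2) guard upper_bound_in_extension show ?thesis
        by (auto simp: extension_def)
    qed
    with c(1) show "sat_incl extension (snd c)"
      by simp
  qed
qed

end

theorem theorem9p3:
  fixes Con :: "'d::finite \<Rightarrow> 'k set"
    and C :: "('d, 'k, 'v::countable) constr set"
    and I :: "'v set"
    and \<theta> :: "'v \<Rightarrow> 'd \<Rightarrow> 'k set"
  assumes "infinite (UNIV :: 'v set)"
    and "\<forall>d. finite (Con d)"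
    and "\<forall>c \<in> C. wf_constr Con c \<and> atomic_constr c"
    and "saturated C"
    and "is_solution Con \<theta> (restrict C I)"
  shows "\<exists>\<theta>'. is_solution Con \<theta>' C \<and> (\<forall>X \<in> I. \<forall>d. \<theta>' X d = \<theta> X d)"
proof -
  interpret restricted_solution Con C I \<theta>
    using assms(3-5) by unfold_locales
  show ?thesis
    using extension_solution extension_on_I by blast
qed

end
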